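(* Let $n\ge 2$, let $(A,+)$ be a non-trivial finite Abelian group and let $w$ be an $A$-arc-labelling of $\overleftrightarrow{K}_n$. Then there exists an $A$-arc-labelling $w'$ of $\overleftrightarrow{K}_n$ which is switching-equivalent to $w$ such that at least one of the following holds: (1) there exist a vertex set $V\subseteq V(\overleftrightarrow{K}_n)$ with $|V|\ge n-4|A|$ and a proper subgroup $B<A$ such that $w'(x,y)\in B$ for every arc $(x,y)$ of the induced subdigraph $\overleftrightarrow{K}_n[V]$; (2) there exist vertices $u,v\in V(\overleftrightarrow{K}_n)$ such that $w'$ is $A$-complete at $u,v$.
   Context: $\overleftrightarrow{K}_n$ denotes the complete digraph on $n$ vertices whose arc set consists of all ordered pairs of distinct vertices. An $A$-arc-labelling of $\overleftrightarrow{K}_n$ is a function $w$ from its arc set to $A$. The labelling $w$ is $A$-complete at vertices $u,v$ if for every $a\in A$ there is a directed path $P_a$ from $u$ to $v$ with $\sum_{(x,y)\in P_a} w(x,y)=a$. For a vertex $v$ and $c\in A$, the switching by $c$ at $v$ transforms $w$ into $w'$ with $w'(x,y)=w(x,y)$ if $x,y\ne v$, $w'(x,y)=w(x,y)+c$ if $x=v$, and $w'(x,y)=w(x,y)-c$ if $y=v$. Two $A$-arc-labellings are switching-equivalent if one can be obtained from the other by a finite sequence of switchings. *)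

theory Defs
  imports Main
begin

text \<open>An A-arc-labelling is a function w :: nat \<Rightarrow> nat \<Rightarrow> 'a whose values
  on arcs are relevant.\<close>

definition is_arc :: "nat \<Rightarrow> nat \<Rightarrow> nat \<Rightarrow> bool" where
  "is_arc n x y \<longleftrightarrow> x < n \<and> y < n \<and> x \<noteq> y"

definition switch :: "nat \<Rightarrow> 'a::ab_group_add \<Rightarrow> (nat \<Rightarrow> nat \<Rightarrow> 'a) \<Rightarrow> (nat \<Rightarrow> nat \<Rightarrow> 'a)" where
  "switch v c w = (\<lambda>x y. if x = v \<and> y \<noteq> v then w x y + c
                          else if y = v \<and> x \<noteq> v then w x y - c
                          else w x y)"

inductive switch_reach :: "nat \<Rightarrow> (nat \<Rightarrow> nat \<Rightarrow> 'a::ab_group_add) \<Rightarrow> (nat \<Rightarrow> nat \<Rightarrow> 'a) \<Rightarrow> bool"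
  for n where
  refl: "switch_reach n w w"
| step: "switch_reach n w w' \<Longrightarrow> v < n \<Longrightarrow> switch_reach n w (switch v c w')"

definition switching_equiv :: "nat \<Rightarrow> (nat \<Rightarrow> nat \<Rightarrow> 'a::ab_group_add) \<Rightarrow> (nat \<Rightarrow> nat \<Rightarrow> 'a) \<Rightarrow> bool" where
  "switching_equiv n w w' \<longleftrightarrow>
     (\<exists>w''. switch_reach n w w'' \<and> (\<forall>x y. is_arc n x y \<longrightarrow> w'' x y = w' x y))"

definition dipath :: "nat \<Rightarrow> nat list \<Rightarrow> nat \<Rightarrow> nat \<Rightarrow> bool" where
  "dipath n xs u v \<longleftrightarrow> xs \<noteq> [] \<and> hd xs = u \<and> last xs = v \<and> distinct xs \<and> set xs \<subseteq> {..<n}"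

definition path_weight :: "(nat \<Rightarrow> nat \<Rightarrow> 'a::ab_group_add) \<Rightarrow> nat list \<Rightarrow> 'a" where
  "path_weight w xs = sum_list (map (\<lambda>(x, y). w x y) (zip xs (tl xs)))"

definition A_complete :: "nat \<Rightarrow> (nat \<Rightarrow> nat \<Rightarrow> 'a::ab_group_add) \<Rightarrow> nat \<Rightarrow> nat \<Rightarrow> bool" where
  "A_complete n w u v \<longleftrightarrow> (\<forall>a::'a. \<exists>xs. dipath n xs u v \<and> path_weight w xs = a)"

definition add_subgroup :: "'a::ab_group_add set \<Rightarrow> bool" where
  "add_subgroup B \<longleftrightarrow> 0 \<in> B \<and> (\<forall>x\<in>B. \<forall>y\<in>B. x + y \<in> B) \<and> (\<forall>x\<in>B. - x \<in> B)"

end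

theory Submission imports Defs begin

text \<open>Grow a nonempty family P of directed paths, all from a vertex u to a common end p and
  all inside a vertex set U with |U| \<le> 2|W|, where W is the set of weights of P.
  As long as W \<noteq> A, the stabiliser B of W under translation is a proper subgroup.
  Switching by the potential w(p, -) gives the labels w(x,y) + w(p,x) - w(p,y); if all of
  them lie in B on the complement of U, which has at least n - 2|A| vertices, alternative (1)
  holds. Otherwise some arc (x,y) outside U has d = w(p,x) + w(x,y) - w(p,y) \<notin> B, and
  extending every path of P either by y or by x, y yields the weights
  (W \<union> (W + d)) + w(p,y), of which there are more than |W|. Since |W| \<le> |A|, the process
  ends with W = A, i.e. with A-completeness at u, p. This gives (1) with n - 2|A| in place
  of n - 4|A| and uses only n > 0.\<close>

lemma path_weight_snoc:
  "xs \<noteq> [] \<Longrightarrow> path_weight w (xs @ [y]) = path_weight w xs + w (last xs) y"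
proof (induction xs rule: induct_list012)
  case (3 a b rest)
  then show ?case by (simp add: path_weight_def add.assoc)
qed (auto simp: path_weight_def)

lemma dipath_ends_less: "dipath n xs u v \<Longrightarrow> u < n \<and> v < n"
  unfolding dipath_def by (metis hd_in_set last_in_set lessThan_iff subsetD)

lemma switching_equiv_refl: "switching_equiv n w w"
  unfolding switching_equiv_def using switch_reach.refl by blast

lemma switching_equiv_potential:
  fixes w :: "nat \<Rightarrow> nat \<Rightarrow> 'a::ab_group_add"
  shows "switching_equiv n w (\<lambda>x y. w x y + f x - f y)"
proof -
  define F where "F k x = (if x < k then f x else 0)" for k x
  define wk where "wk k = (\<lambda>x y. if x = y then w x y else w x y + F k x - F k y)" for k
  have "switch_reach n w (wk k)" if "k \<le> n" for k
    using that
  proof (induction k)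
    case 0
    have "wk 0 = w" by (auto simp: wk_def F_def fun_eq_iff)
    then show ?case using switch_reach.refl by metis
  next
    case (Suc k)
    have "switch_reach n w (switch k (f k) (wk k))"
      using Suc by (intro switch_reach.step) auto
    moreover have "switch k (f k) (wk k) = wk (Suc k)"
      by (auto simp: fun_eq_iff switch_def wk_def F_def algebra_simps)
    ultimately show ?case by simp
  qed
  then show ?thesis unfolding switching_equiv_def
    by (intro exI[of _ "wk n"]) (auto simp: is_arc_def wk_def F_def)
qed

definition stabilizer :: "'a::ab_group_add set \<Rightarrow> 'a set" where
  "stabilizer W = {h. (\<lambda>s. s + h) ` W = W}"

lemma add_subgroup_stabilizer: "add_subgroup (stabilizer W)"
  unfolding add_subgroup_def stabilizer_def
proof (intro conjI ballI; simp)
  fix x y assume x: "(\<lambda>s. s + x) ` W = W" and y: "(\<lambda>s. s + y) ` W = W"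
  have "(\<lambda>s. s + (x + y)) ` W = (\<lambda>s. s + y) ` ((\<lambda>s. s + x) ` W)"
    by (simp add: image_image add.assoc)
  then show "(\<lambda>s. s + (x + y)) ` W = W" using x y by simp
next
  fix x assume x: "(\<lambda>s. s + x) ` W = W"
  have "(\<lambda>s. s - x) ` ((\<lambda>s. s + x) ` W) = W" by (simp add: image_image)
  then show "(\<lambda>s. s - x) ` W = W" using x by simp
qed

lemma stabilizer_neq_UNIV:
  assumes "W \<noteq> {}" "W \<noteq> UNIV"
  shows "stabilizer W \<noteq> UNIV"
proof
  assume stab: "stabilizer W = UNIV"
  obtain s0 where s0: "s0 \<in> W" using assms by auto
  have "a \<in> W" for a
  proof -
    have "(\<lambda>s. s + (a - s0)) ` W = W" using stab by (auto simp: stabilizer_def)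
    then have "s0 + (a - s0) \<in> W" using s0 by blast
    then show ?thesis by simp
  qed
  then show False using assms by auto
qed

lemma card_lt_Un_translate:
  fixes W :: "'a::ab_group_add set"
  assumes "finite W" "d \<notin> stabilizer W"
  shows "card W < card (W \<union> (\<lambda>s. s + d) ` W)"
proof -
  have same_card: "card ((\<lambda>s. s + d) ` W) = card W"
    by (rule card_image) (auto simp: inj_on_def)
  have "\<not> (\<lambda>s. s + d) ` W \<subseteq> W"
  proof
    assume "(\<lambda>s. s + d) ` W \<subseteq> W"
    then have "(\<lambda>s. s + d) ` W = W" using card_subset_eq[OF assms(1) _ same_card] by blast
    then show False using assms(2) by (simp add: stabilizer_def)
  qed
  then have "W \<subset> W \<union> (\<lambda>s. s + d) ` W" by blast
  then show ?thesis using assms(1) by (intro psubset_card_mono) auto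
qed

definition path_bundle :: "nat \<Rightarrow> nat list set \<Rightarrow> nat \<Rightarrow> nat \<Rightarrow> nat set \<Rightarrow> bool" where
  "path_bundle n P u p U \<longleftrightarrow>
     P \<noteq> {} \<and> U \<subseteq> {..<n} \<and> (\<forall>xs\<in>P. dipath n xs u p \<and> set xs \<subseteq> U)"

definition extend_paths :: "nat \<Rightarrow> nat \<Rightarrow> nat list set \<Rightarrow> nat list set" where
  "extend_paths x y P = (\<lambda>xs. xs @ [y]) ` P \<union> (\<lambda>xs. xs @ [x, y]) ` P"

lemma path_bundle_extend_paths:
  assumes "path_bundle n P u p U" "x \<in> {..<n} - U" "y \<in> {..<n} - U" "x \<noteq> y"
  shows "path_bundle n (extend_paths x y P) u y (insert x (insert y U))"
  using assms unfolding path_bundle_def extend_paths_def dipath_def by fastforce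

lemma path_weight_extend_paths:
  fixes w :: "nat \<Rightarrow> nat \<Rightarrow> 'a::ab_group_add"
  assumes "path_bundle n P u p U"
  shows "path_weight w ` extend_paths x y P =
    (\<lambda>s. s + w p y) ` (path_weight w ` P \<union> (\<lambda>s. s + (w p x + w x y - w p y)) ` path_weight w ` P)"
proof -
  have last: "xs \<noteq> [] \<and> last xs = p" if "xs \<in> P" for xs
    using assms that by (auto simp: path_bundle_def dipath_def)
  have "path_weight w (xs @ [x, y]) = path_weight w xs + w p x + w x y" if "xs \<in> P" for xs
    using path_weight_snoc[of "xs @ [x]" w y] path_weight_snoc[of xs w x] last[OF that]
    by simp
  then show ?thesis
    using last path_weight_snoc[of _ w y]
    by (force simp: extend_paths_def image_Un image_image algebra_simps)
qed

lemma card_path_weight_extend_paths: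
  fixes w :: "nat \<Rightarrow> nat \<Rightarrow> 'a::{finite, ab_group_add}"
  assumes "path_bundle n P u p U" "w p x + w x y - w p y \<notin> stabilizer (path_weight w ` P)"
  shows "card (path_weight w ` P) < card (path_weight w ` extend_paths x y P)"
proof -
  have "card (path_weight w ` extend_paths x y P) =
      card (path_weight w ` P \<union> (\<lambda>s. s + (w p x + w x y - w p y)) ` path_weight w ` P)"
    unfolding path_weight_extend_paths[OF assms(1)]
    by (rule card_image) (auto simp: inj_on_def)
  then show ?thesis using card_lt_Un_translate[OF _ assms(2)] by simp
qed

lemma A_complete_if_path_weights_UNIV:
  assumes "path_bundle n P u p U" "path_weight w ` P = UNIV"
  shows "A_complete n w u p"
  unfolding A_complete_def
proof
  fix a
  have "a \<in> path_weight w ` P" using assms(2) by simp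
  then obtain xs where "xs \<in> P" "path_weight w xs = a" by blast
  then show "\<exists>xs. dipath n xs u p \<and> path_weight w xs = a"
    using assms(1) by (auto simp: path_bundle_def)
qed

lemma path_bundle_grows_or_switched_subgroup:
  fixes w :: "nat \<Rightarrow> nat \<Rightarrow> 'a::{finite, ab_group_add}"
  assumes paths: "path_bundle n P u p U"
    and U_card: "card U \<le> 2 * card (path_weight w ` P)"
    and not_all: "path_weight w ` P \<noteq> UNIV"
  shows "(\<exists>P' U' p'. path_bundle n P' u p' U' \<and> card U' \<le> 2 * card (path_weight w ` P') \<and>
       card (path_weight w ` P) < card (path_weight w ` P')) \<or>
    (\<exists>f V B. V \<subseteq> {..<n} \<and> n \<le> card V + 2 * card (UNIV :: 'a set) \<and>
       add_subgroup B \<and> B \<noteq> UNIV \<and> (\<forall>x\<in>V. \<forall>y\<in>V. x \<noteq> y \<longrightarrow> w x y + f x - f y \<in> B))"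
    (is "?grows \<or> ?subgroup")
proof (rule disjCI)
  assume "\<not> ?subgroup"
  have proper: "stabilizer (path_weight w ` P) \<noteq> UNIV"
    using paths not_all by (intro stabilizer_neq_UNIV) (auto simp: path_bundle_def)
  have U_sub: "U \<subseteq> {..<n}" using paths by (simp add: path_bundle_def)
  then have "card ({..<n} - U) = n - card U"
    by (simp add: card_Diff_subset finite_subset)
  moreover have "card (path_weight w ` P) \<le> card (UNIV :: 'a set)" by (simp add: card_mono)
  ultimately have V_card: "n \<le> card ({..<n} - U) + 2 * card (UNIV :: 'a set)" using U_card by linarith
  have "\<not> (\<forall>x\<in>{..<n} - U. \<forall>y\<in>{..<n} - U.
      x \<noteq> y \<longrightarrow> w x y + w p x - w p y \<in> stabilizer (path_weight w ` P))"
  proof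
    assume "\<forall>x\<in>{..<n} - U. \<forall>y\<in>{..<n} - U.
      x \<noteq> y \<longrightarrow> w x y + w p x - w p y \<in> stabilizer (path_weight w ` P)"
    then have ?subgroup
      using V_card add_subgroup_stabilizer proper
      by (intro exI[of _ "w p"] exI[of _ "{..<n} - U"] exI[of _ "stabilizer (path_weight w ` P)"])
        auto
    with \<open>\<not> ?subgroup\<close> show False ..
  qed
  then obtain x y where xy: "x \<in> {..<n} - U" "y \<in> {..<n} - U" "x \<noteq> y"
    and outside: "w x y + w p x - w p y \<notin> stabilizer (path_weight w ` P)"
    by blast
  have grows: "card (path_weight w ` P) < card (path_weight w ` extend_paths x y P)"
    using card_path_weight_extend_paths[OF paths, where w = w] outside
    by (simp add: algebra_simps)
  have "card (insert x (insert y U)) = card U + 2"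
    using xy U_sub by (simp add: finite_subset)
  then show ?grows
    using path_bundle_extend_paths[OF paths xy] U_card grows
    by (intro exI[of _ "extend_paths x y P"] exI[of _ "insert x (insert y U)"]) fastforce
qed

lemma A_complete_or_switched_subgroup:
  fixes w :: "nat \<Rightarrow> nat \<Rightarrow> 'a::{finite, ab_group_add}"
  assumes "0 < n"
  shows "(\<exists>u v. u < n \<and> v < n \<and> A_complete n w u v) \<or>
    (\<exists>f V B. V \<subseteq> {..<n} \<and> n \<le> card V + 2 * card (UNIV :: 'a set) \<and>
       add_subgroup B \<and> B \<noteq> UNIV \<and> (\<forall>x\<in>V. \<forall>y\<in>V. x \<noteq> y \<longrightarrow> w x y + f x - f y \<in> B))"
    (is "?complete \<or> ?subgroup")
proof (rule disjCI)
  assume "\<not> ?subgroup"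
  define grown where "grown m \<longleftrightarrow> (\<exists>P U u p. path_bundle n P u p U \<and>
    card U \<le> 2 * card (path_weight w ` P) \<and> card (path_weight w ` P) = m)" for m
  have start: "grown 1"
    unfolding grown_def path_bundle_def dipath_def using assms
    by (intro exI[of _ "{[0]}"] exI[of _ "{0}"]) auto
  have bounded: "\<forall>m. grown m \<longrightarrow> m \<le> card (UNIV :: 'a set)"
    by (auto simp: grown_def card_mono)
  obtain m where "grown m" and m_max: "\<forall>m'. grown m' \<longrightarrow> m' \<le> m"
    using Nat.ex_has_greatest_nat[OF start bounded] by blast
  then obtain P U u p where paths: "path_bundle n P u p U"
    and U_card: "card U \<le> 2 * card (path_weight w ` P)" and m: "card (path_weight w ` P) = m"
    unfolding grown_def by blast
  have "path_weight w ` P = UNIV"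
  proof (rule ccontr)
    assume "path_weight w ` P \<noteq> UNIV"
    with \<open>\<not> ?subgroup\<close> obtain P' U' p' where "path_bundle n P' u p' U'"
      "card U' \<le> 2 * card (path_weight w ` P')" and larger: "m < card (path_weight w ` P')"
      using path_bundle_grows_or_switched_subgroup[OF paths U_card] m by blast
    then have "grown (card (path_weight w ` P'))" unfolding grown_def by blast
    then show False using m_max larger by (meson leD)
  qed
  moreover obtain xs where "dipath n xs u p"
    using paths unfolding path_bundle_def by blast
  ultimately show ?complete
    using A_complete_if_path_weights_UNIV[OF paths] dipath_ends_less by blast
qed

theorem lemma5:
  fixes n :: nat and w :: "nat \<Rightarrow> nat \<Rightarrow> 'a::{finite, ab_group_add}"
  assumes "n \<ge> 2" and "card (UNIV :: 'a set) \<ge> 2"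
  shows "\<exists>w'. switching_equiv n w w' \<and>
           ((\<exists>V B. V \<subseteq> {..<n} \<and> int (card V) \<ge> int n - 4 * int (card (UNIV :: 'a set)) \<and>
                   add_subgroup B \<and> B \<noteq> (UNIV :: 'a set) \<and>
                   (\<forall>x\<in>V. \<forall>y\<in>V. x \<noteq> y \<longrightarrow> w' x y \<in> B))
            \<or> (\<exists>u v. u < n \<and> v < n \<and> A_complete n w' u v))"
proof -
  from assms(1) consider (complete) u v where "u < n" "v < n" "A_complete n w u v"
    | (subgroup) f V B where "V \<subseteq> {..<n}" "n \<le> card V + 2 * card (UNIV :: 'a set)"
        "add_subgroup B" "B \<noteq> UNIV" "\<forall>x\<in>V. \<forall>y\<in>V. x \<noteq> y \<longrightarrow> w x y + f x - f y \<in> B"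
    using A_complete_or_switched_subgroup[of n w] by (metis gr0I not_numeral_le_zero)
  then show ?thesis
  proof cases
    case complete
    then show ?thesis using switching_equiv_refl by blast
  next
    case subgroup
    then have "int (card V) \<ge> int n - 4 * int (card (UNIV :: 'a set))" by linarith
    with subgroup show ?thesis
      by (intro exI[of _ "\<lambda>x y. w x y + f x - f y"] conjI switching_equiv_potential disjI1) blast
  qed
qed

end
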